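(* Let $(Q_1,* )$ and $(Q_2,\cdot)$ be automorphic loops and let $\varphi:Q_1\to Q_2$ be a special half-isomorphism. If $\varphi$ has no GG-triple, then $\varphi$ is trivial, i.e. it is either an isomorphism or an anti-isomorphism.
   Context: A loop is a set with a binary operation in which all equations $ax=b$, $ya=b$ are uniquely solvable and which has a two-sided identity. For $a\in L$, $R_a:x\mapsto xa$, $L_a:x\mapsto ax$; the inner mapping group is the stabilizer of the identity in the group generated by all $R_a,L_a$. A loop is automorphic if every inner mapping is an automorphism. A half-isomorphism between loops $(L,* )$, $(L',\cdot)$ is a bijection $f$ with $f(x*y)\in\{f(x)\cdot f(y),f(y)\cdot f(x)\}$ for all $x,y\in L$; it is special if $f^{-1}$ is also a half-isomorphism, and trivial if it is an isomorphism or an anti-isomorphism ($f(x*y)=f(y)\cdot f(x)$ for all $x,y$). A GG-triple of a half-isomorphism $f$ is a triple $(x,y,z)$ of elements of $L$ such that $f(x*y)=f(x)\cdot f(y)\neq f(y)\cdot f(x)$ and $f(x*z)=f(z)\cdot f(x)\neq f(x)\cdot f(z)$. *)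

theory Defs
  imports Main
begin

text \<open>A loop is represented by a type 'a (its carrier is UNIV) together with a binary operation.\<close>

definition is_loop :: "('a \<Rightarrow> 'a \<Rightarrow> 'a) \<Rightarrow> bool" where
  "is_loop m \<longleftrightarrow>
     (\<forall>a b. \<exists>!x. m a x = b) \<and> (\<forall>a b. \<exists>!y. m y a = b) \<and>
     (\<exists>e. \<forall>x. m e x = x \<and> m x e = x)"

definition loop_unit :: "('a \<Rightarrow> 'a \<Rightarrow> 'a) \<Rightarrow> 'a" where
  "loop_unit m = (THE e. \<forall>x. m e x = x \<and> m x e = x)"

definition Rmap :: "('a \<Rightarrow> 'a \<Rightarrow> 'a) \<Rightarrow> 'a \<Rightarrow> 'a \<Rightarrow> 'a" where
  "Rmap m a = (\<lambda>x. m x a)"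

definition Lmap :: "('a \<Rightarrow> 'a \<Rightarrow> 'a) \<Rightarrow> 'a \<Rightarrow> 'a \<Rightarrow> 'a" where
  "Lmap m a = (\<lambda>x. m a x)"

inductive_set mult_group :: "('a \<Rightarrow> 'a \<Rightarrow> 'a) \<Rightarrow> ('a \<Rightarrow> 'a) set" for m where
  mg_id: "id \<in> mult_group m"
| mg_R: "Rmap m a \<in> mult_group m"
| mg_L: "Lmap m a \<in> mult_group m"
| mg_comp: "f \<in> mult_group m \<Longrightarrow> g \<in> mult_group m \<Longrightarrow> f \<circ> g \<in> mult_group m"
| mg_inv: "f \<in> mult_group m \<Longrightarrow> inv f \<in> mult_group m"

definition inner_mappings :: "('a \<Rightarrow> 'a \<Rightarrow> 'a) \<Rightarrow> ('a \<Rightarrow> 'a) set" where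
  "inner_mappings m = {f \<in> mult_group m. f (loop_unit m) = loop_unit m}"

definition is_automorphism :: "('a \<Rightarrow> 'a \<Rightarrow> 'a) \<Rightarrow> ('a \<Rightarrow> 'a) \<Rightarrow> bool" where
  "is_automorphism m f \<longleftrightarrow> bij f \<and> (\<forall>x y. f (m x y) = m (f x) (f y))"

definition automorphic_loop :: "('a \<Rightarrow> 'a \<Rightarrow> 'a) \<Rightarrow> bool" where
  "automorphic_loop m \<longleftrightarrow> is_loop m \<and> (\<forall>f \<in> inner_mappings m. is_automorphism m f)"

definition half_isomorphism ::
  "('a \<Rightarrow> 'a \<Rightarrow> 'a) \<Rightarrow> ('b \<Rightarrow> 'b \<Rightarrow> 'b) \<Rightarrow> ('a \<Rightarrow> 'b) \<Rightarrow> bool" where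
  "half_isomorphism m1 m2 f \<longleftrightarrow> bij f \<and>
     (\<forall>x y. f (m1 x y) = m2 (f x) (f y) \<or> f (m1 x y) = m2 (f y) (f x))"

definition special_half_isomorphism ::
  "('a \<Rightarrow> 'a \<Rightarrow> 'a) \<Rightarrow> ('b \<Rightarrow> 'b \<Rightarrow> 'b) \<Rightarrow> ('a \<Rightarrow> 'b) \<Rightarrow> bool" where
  "special_half_isomorphism m1 m2 f \<longleftrightarrow>
     half_isomorphism m1 m2 f \<and> half_isomorphism m2 m1 (inv f)"

definition isomorphism ::
  "('a \<Rightarrow> 'a \<Rightarrow> 'a) \<Rightarrow> ('b \<Rightarrow> 'b \<Rightarrow> 'b) \<Rightarrow> ('a \<Rightarrow> 'b) \<Rightarrow> bool" where
  "isomorphism m1 m2 f \<longleftrightarrow> bij f \<and> (\<forall>x y. f (m1 x y) = m2 (f x) (f y))"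

definition anti_isomorphism ::
  "('a \<Rightarrow> 'a \<Rightarrow> 'a) \<Rightarrow> ('b \<Rightarrow> 'b \<Rightarrow> 'b) \<Rightarrow> ('a \<Rightarrow> 'b) \<Rightarrow> bool" where
  "anti_isomorphism m1 m2 f \<longleftrightarrow> bij f \<and> (\<forall>x y. f (m1 x y) = m2 (f y) (f x))"

definition trivial_half_isomorphism ::
  "('a \<Rightarrow> 'a \<Rightarrow> 'a) \<Rightarrow> ('b \<Rightarrow> 'b \<Rightarrow> 'b) \<Rightarrow> ('a \<Rightarrow> 'b) \<Rightarrow> bool" where
  "trivial_half_isomorphism m1 m2 f \<longleftrightarrow> isomorphism m1 m2 f \<or> anti_isomorphism m1 m2 f"

definition GG_triple ::
  "('a \<Rightarrow> 'a \<Rightarrow> 'a) \<Rightarrow> ('b \<Rightarrow> 'b \<Rightarrow> 'b) \<Rightarrow> ('a \<Rightarrow> 'b) \<Rightarrow> 'a \<Rightarrow> 'a \<Rightarrow> 'a \<Rightarrow> bool" where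
  "GG_triple m1 m2 f x y z \<longleftrightarrow>
     f (m1 x y) = m2 (f x) (f y) \<and> m2 (f x) (f y) \<noteq> m2 (f y) (f x) \<and>
     f (m1 x z) = m2 (f z) (f x) \<and> m2 (f z) (f x) \<noteq> m2 (f x) (f z)"

end

theory Submission
  imports Defs
begin

text \<open>
  In an automorphic loop the inner mapping \<open>T\<^sub>c = L\<^sub>c\<^sup>-\<^sup>1 R\<^sub>c\<close> is an automorphism whose
  fixed points are the elements commuting with \<open>c\<close>, so these are closed under left and right
  division. Without GG-triples every \<open>x\<close> acts either homomorphically (\<open>\<phi>(xy) = \<phi>(x)\<phi>(y)\<close>
  for all \<open>y\<close>) or anti-homomorphically, and elements of different kinds commute. Given
  \<open>x\<close> of the first kind with \<open>xy \<noteq> yx\<close> and \<open>w\<close> of the second kind with \<open>wz \<noteq> zw\<close>,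
  \<open>y\<close> is of the first and \<open>z\<close> of the second kind, and whichever kind \<open>xw\<close> has, division
  forces \<open>xy = yx\<close> or \<open>wz = zw\<close>. Hence one kind lies in the commutant, and there both
  kinds coincide because a special half-isomorphism preserves commuting pairs.
\<close>

definition commutant :: "('a \<Rightarrow> 'a \<Rightarrow> 'a) \<Rightarrow> 'a set" where
  "commutant m = {c. \<forall>x. m c x = m x c}"

definition hom_elements :: "('a \<Rightarrow> 'a \<Rightarrow> 'a) \<Rightarrow> ('b \<Rightarrow> 'b \<Rightarrow> 'b) \<Rightarrow> ('a \<Rightarrow> 'b) \<Rightarrow> 'a set" where
  "hom_elements m1 m2 f = {x. \<forall>y. f (m1 x y) = m2 (f x) (f y)}"

definition antihom_elements :: "('a \<Rightarrow> 'a \<Rightarrow> 'a) \<Rightarrow> ('b \<Rightarrow> 'b \<Rightarrow> 'b) \<Rightarrow> ('a \<Rightarrow> 'b) \<Rightarrow> 'a set" where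
  "antihom_elements m1 m2 f = {x. \<forall>y. f (m1 x y) = m2 (f y) (f x)}"

lemma loop_unit:
  assumes "is_loop m"
  shows "m (loop_unit m) x = x" and "m x (loop_unit m) = x"
proof -
  obtain e where e: "\<And>x. m e x = x \<and> m x e = x"
    using assms unfolding is_loop_def by blast
  have "loop_unit m = e"
    unfolding loop_unit_def
  proof (rule the_equality)
    fix e' assume "\<forall>x. m e' x = x \<and> m x e' = x"
    then have "m e' e = e" by blast
    moreover have "m e' e = e'" using e by blast
    ultimately show "e' = e" by simp
  qed (use e in blast)
  then show "m (loop_unit m) x = x" and "m x (loop_unit m) = x"
    using e by simp_all
qed

lemma loop_left_cancel:
  assumes "is_loop m" and "m a x = m a y"
  shows "x = y"
proof -
  from assms(1) have "\<exists>!z. m a z = m a y"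
    unfolding is_loop_def by blast
  with assms(2) show ?thesis by blast
qed

lemma loop_right_cancel:
  assumes "is_loop m" and "m x a = m y a"
  shows "x = y"
proof -
  from assms(1) have "\<exists>!z. m z a = m y a"
    unfolding is_loop_def by blast
  with assms(2) show ?thesis by blast
qed

lemma bij_Lmap:
  assumes "is_loop m"
  shows "bij (Lmap m c)"
proof -
  from assms have "\<forall>b. \<exists>!x. m c x = b"
    unfolding is_loop_def by blast
  then show ?thesis
    unfolding bij_iff Lmap_def by simp
qed

lemma Lmap_inv_Rmap_fixed_iff:
  assumes "is_loop m"
  shows "(inv (Lmap m c) \<circ> Rmap m c) a = a \<longleftrightarrow> m a c = m c a"
proof -
  have "a = inv (Lmap m c) (m a c) \<longleftrightarrow> Lmap m c a = m a c"
    by (rule bij_inv_eq_iff[OF bij_Lmap[OF assms]])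
  then show ?thesis
    unfolding comp_apply Rmap_def Lmap_def by (metis (no_types))
qed

lemma Lmap_inv_Rmap_inner_mapping:
  assumes "is_loop m"
  shows "inv (Lmap m c) \<circ> Rmap m c \<in> inner_mappings m"
proof -
  have "inv (Lmap m c) \<circ> Rmap m c \<in> mult_group m"
    by (intro mult_group.mg_comp mult_group.mg_inv mult_group.mg_L mult_group.mg_R)
  moreover have "(inv (Lmap m c) \<circ> Rmap m c) (loop_unit m) = loop_unit m"
    using Lmap_inv_Rmap_fixed_iff[OF assms] loop_unit[OF assms] by simp
  ultimately show ?thesis
    unfolding inner_mappings_def by simp
qed

lemma automorphism_fixed_left_div:
  assumes "is_loop m" and "is_automorphism m T"
    and "T a = a" and "T (m a b) = m a b"
  shows "T b = b"
proof -
  have "T (m a b) = m (T a) (T b)"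
    using assms(2) unfolding is_automorphism_def by blast
  then have "m a (T b) = m a b"
    using assms(3,4) by simp
  then show ?thesis
    by (rule loop_left_cancel[OF assms(1)])
qed

lemma automorphism_fixed_right_div:
  assumes "is_loop m" and "is_automorphism m T"
    and "T b = b" and "T (m a b) = m a b"
  shows "T a = a"
proof -
  have "T (m a b) = m (T a) (T b)"
    using assms(2) unfolding is_automorphism_def by blast
  then have "m (T a) b = m a b"
    using assms(3,4) by simp
  then show ?thesis
    by (rule loop_right_cancel[OF assms(1)])
qed

lemma automorphic_loop_Lmap_inv_Rmap_automorphism:
  assumes "automorphic_loop m"
  shows "is_automorphism m (inv (Lmap m c) \<circ> Rmap m c)"
proof -
  have "inv (Lmap m c) \<circ> Rmap m c \<in> inner_mappings m"
    using assms Lmap_inv_Rmap_inner_mapping[of m c] unfolding automorphic_loop_def by blast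
  with assms show ?thesis
    unfolding automorphic_loop_def by blast
qed

lemma automorphic_loop_commuting_left_div:
  assumes "automorphic_loop m"
    and "m a c = m c a" and "m (m a b) c = m c (m a b)"
  shows "m b c = m c b"
proof -
  have loop: "is_loop m"
    using assms(1) unfolding automorphic_loop_def by blast
  note fixed_iff = Lmap_inv_Rmap_fixed_iff[OF loop, of c]
  have "(inv (Lmap m c) \<circ> Rmap m c) b = b"
    using automorphism_fixed_left_div[OF loop automorphic_loop_Lmap_inv_Rmap_automorphism[OF assms(1)]]
      fixed_iff[THEN iffD2, OF assms(2)] fixed_iff[THEN iffD2, OF assms(3)] .
  then show ?thesis
    by (rule fixed_iff[THEN iffD1])
qed

lemma automorphic_loop_commuting_right_div:
  assumes "automorphic_loop m"
    and "m b c = m c b" and "m (m a b) c = m c (m a b)"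
  shows "m a c = m c a"
proof -
  have loop: "is_loop m"
    using assms(1) unfolding automorphic_loop_def by blast
  note fixed_iff = Lmap_inv_Rmap_fixed_iff[OF loop, of c]
  have "(inv (Lmap m c) \<circ> Rmap m c) a = a"
    using automorphism_fixed_right_div[OF loop automorphic_loop_Lmap_inv_Rmap_automorphism[OF assms(1)]]
      fixed_iff[THEN iffD2, OF assms(2)] fixed_iff[THEN iffD2, OF assms(3)] .
  then show ?thesis
    by (rule fixed_iff[THEN iffD1])
qed

lemma automorphic_loop_commuting_cover:
  assumes "automorphic_loop m" and cover: "A \<union> B = UNIV"
    and commute: "\<And>a b. a \<in> A \<Longrightarrow> b \<in> B \<Longrightarrow> m a b = m b a"
  shows "A \<subseteq> commutant m \<or> B \<subseteq> commutant m"
proof (rule ccontr)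
  assume "\<not> ?thesis"
  then obtain x y w z where x: "x \<in> A" "m x y \<noteq> m y x" and w: "w \<in> B" "m w z \<noteq> m z w"
    unfolding commutant_def by blast
  have y: "y \<in> A"
    using cover commute[OF x(1)] x(2) by blast
  have z: "z \<in> B"
  proof (rule ccontr)
    assume "z \<notin> B"
    with cover have "z \<in> A" by blast
    from commute[OF this w(1)] w(2) show False by simp
  qed
  consider "m x w \<in> B" | "m x w \<in> A"
    using cover by blast
  then show False
  proof cases
    case 1
    have "m x y = m y x"
      using automorphic_loop_commuting_right_div[OF assms(1)
          commute[OF y w(1), symmetric] commute[OF y 1, symmetric]] .
    with x(2) show False ..
  next
    case 2
    have "m w z = m z w"
      using automorphic_loop_commuting_left_div[OF assms(1)
          commute[OF x(1) z] commute[OF 2 z]] .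
    with w(2) show False ..
  qed
qed

lemma no_GG_triple_hom_antihom_cover:
  assumes "half_isomorphism m1 m2 f" and "\<not> (\<exists>x y z. GG_triple m1 m2 f x y z)"
  shows "hom_elements m1 m2 f \<union> antihom_elements m1 m2 f = UNIV"
proof -
  have "x \<in> hom_elements m1 m2 f \<or> x \<in> antihom_elements m1 m2 f" for x
  proof (rule ccontr)
    assume "\<not> ?thesis"
    then obtain y z where "f (m1 x y) \<noteq> m2 (f x) (f y)" and "f (m1 x z) \<noteq> m2 (f z) (f x)"
      unfolding hom_elements_def antihom_elements_def by blast
    moreover from assms(1) this have "f (m1 x y) = m2 (f y) (f x)" and "f (m1 x z) = m2 (f x) (f z)"
      unfolding half_isomorphism_def by blast+
    ultimately have "GG_triple m1 m2 f x z y"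
      unfolding GG_triple_def by simp
    with assms(2) show False by blast
  qed
  then show ?thesis by blast
qed

lemma hom_antihom_elements_commute:
  assumes "inj f" and "a \<in> hom_elements m1 m2 f" and "b \<in> antihom_elements m1 m2 f"
  shows "m1 a b = m1 b a"
proof -
  have "f (m1 a b) = f (m1 b a)"
    using assms(2,3) unfolding hom_elements_def antihom_elements_def by simp
  then show ?thesis
    by (rule injD[OF assms(1)])
qed

lemma half_isomorphism_inv_commuting:
  assumes "bij f" and "half_isomorphism m2 m1 (inv f)" and "m1 x y = m1 y x"
  shows "m2 (f x) (f y) = m2 (f y) (f x)"
proof -
  have image: "m2 (f u) (f v) = f (m1 x y)" if "m1 u v = m1 x y" and "m1 v u = m1 x y" for u v
  proof -
    have "inv f (m2 (f u) (f v)) = m1 (inv f (f u)) (inv f (f v)) \<or>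
        inv f (m2 (f u) (f v)) = m1 (inv f (f v)) (inv f (f u))"
      using assms(2) unfolding half_isomorphism_def by blast
    then have "inv f (m2 (f u) (f v)) = m1 x y"
      unfolding inv_f_f[OF bij_is_inj[OF assms(1)]] that by (rule disjE)
    then have "f (inv f (m2 (f u) (f v))) = f (m1 x y)"
      by (rule arg_cong)
    then show ?thesis
      unfolding surj_f_inv_f[OF bij_is_surj[OF assms(1)]] .
  qed
  show ?thesis
    using image[OF refl assms(3)[symmetric]] image[OF assms(3)[symmetric] refl] by simp
qed

lemma isomorphism_iff_hom_elements:
  "isomorphism m1 m2 f \<longleftrightarrow> bij f \<and> hom_elements m1 m2 f = UNIV"
  unfolding isomorphism_def hom_elements_def by blast

lemma anti_isomorphism_iff_antihom_elements:
  "anti_isomorphism m1 m2 f \<longleftrightarrow> bij f \<and> antihom_elements m1 m2 f = UNIV"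
  unfolding anti_isomorphism_def antihom_elements_def by blast

lemma commutant_hom_elements_iff:
  assumes "special_half_isomorphism m1 m2 f" and "x \<in> commutant m1"
  shows "x \<in> hom_elements m1 m2 f \<longleftrightarrow> x \<in> antihom_elements m1 m2 f"
proof -
  have "bij f" and "half_isomorphism m2 m1 (inv f)"
    using assms(1) unfolding special_half_isomorphism_def half_isomorphism_def by blast+
  moreover have "m1 x y = m1 y x" for y
    using assms(2) unfolding commutant_def by blast
  ultimately have "m2 (f x) (f y) = m2 (f y) (f x)" for y
    by (rule half_isomorphism_inv_commuting)
  then have "f (m1 x y) = m2 (f x) (f y) \<longleftrightarrow> f (m1 x y) = m2 (f y) (f x)" for y
    by (simp only:)
  then show ?thesis
    unfolding hom_elements_def antihom_elements_def by simp
qed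

theorem proposition4p4:
  fixes m1 :: "'a \<Rightarrow> 'a \<Rightarrow> 'a" and m2 :: "'b \<Rightarrow> 'b \<Rightarrow> 'b" and f :: "'a \<Rightarrow> 'b"
  assumes "automorphic_loop m1"
    and "automorphic_loop m2"
    and "special_half_isomorphism m1 m2 f"
    and "\<not> (\<exists>x y z. GG_triple m1 m2 f x y z)"
  shows "trivial_half_isomorphism m1 m2 f"
proof -
  let ?H = "hom_elements m1 m2 f" and ?K = "antihom_elements m1 m2 f"
  have half: "half_isomorphism m1 m2 f"
    using assms(3) unfolding special_half_isomorphism_def by blast
  then have "bij f"
    unfolding half_isomorphism_def by blast
  have cover: "?H \<union> ?K = UNIV"
    using no_GG_triple_hom_antihom_cover[OF half assms(4)] .
  have "?H \<subseteq> commutant m1 \<or> ?K \<subseteq> commutant m1"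
    by (rule automorphic_loop_commuting_cover[OF assms(1) cover
          hom_antihom_elements_commute[of f _ m1 m2, OF bij_is_inj[OF \<open>bij f\<close>]]])
  then have "?H \<subseteq> ?K \<or> ?K \<subseteq> ?H"
    using commutant_hom_elements_iff[OF assms(3)] by blast
  then have "?H = UNIV \<or> ?K = UNIV"
    using cover by blast
  then show ?thesis
    using \<open>bij f\<close> unfolding trivial_half_isomorphism_def
      isomorphism_iff_hom_elements anti_isomorphism_iff_antihom_elements by blast
qed

end
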